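(* Let $A\in\mathbb{R}^{n\times n}$ be symmetric positive semidefinite and $b\in\mathbb{R}^n$. Apply the $CD$ method (described in the context) to $Ay=b$ with starting point $y_0\in\mathbb{R}^n$ and real parameters $\gamma_i\neq0$, and assume it runs without breakdown (all denominators nonzero) and produces $y_0,\dots,y_{m+1}$, $r_0,\dots,r_m$ (all nonzero) and $p_0,\dots,p_m$, with $m+1\le n$ and $Ay_{m+1}=b$. Let $y^\ast$ be any solution of $Ay=b$, let $f(y)=\tfrac12(y-y^\ast)^TA(y-y^\ast)$, and for $i\in\{1,\dots,m\}$ let $g_i(y)=\tfrac12(y-y_i)^TA(y-y_i)$. Then: (1) the minimum of $g_1$ over the line $\{y_1+\gamma_0Ap_0+tp_0:\ t\in\mathbb{R}\}$ is attained at $t=-\sigma_0$; (2) for each $i=2,\dots,m$, the minimum of $g_i$ over the two-dimensional affine set $\{y_i+\gamma_{i-1}Ap_{i-1}+sp_{i-1}+tp_{i-2}:\ s,t\in\mathbb{R}\}$ is attained at $(s,t)=(-\sigma_{i-1},-\omega_{i-1})$; (3) for $i=1,\dots,m$, $$f(y_i+a_ip_i)=f(y_i)-\frac12\left(\frac{\gamma_{i-1}}{a_{i-1}}\right)^2\frac{\|r_i\|^4}{p_i^TAp_i};$$ (4) with $A^+$ the Moore–Penrose pseudoinverse of $A$, $$\left[A^+-\sum_{i=0}^m\frac{p_ip_i^T}{p_i^TAp_i}\right]r_0=0.$$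
   Context: The $CD$ method for solving $Ay=b$, with starting point $y_0\in\mathbb{R}^n$ and nonzero real parameters $\gamma_0,\gamma_1,\dots$, is the following iteration (all norms Euclidean). Set $r_0=b-Ay_0$; if $r_0=0$ stop; set $p_0=r_0$. For $k=0,1,2,\dots$: compute $a_k=\dfrac{r_k^Tp_k}{p_k^TAp_k}$, $y_{k+1}=y_k+a_kp_k$, $r_{k+1}=r_k-a_kAp_k$; if $r_{k+1}=0$ stop; otherwise set $\sigma_k=\gamma_k\dfrac{\|Ap_k\|^2}{p_k^TAp_k}$ and, if $k=0$, $p_1=\gamma_0Ap_0-\sigma_0p_0$, while if $k\ge1$, $\omega_k=\gamma_k\dfrac{(Ap_k)^T(Ap_{k-1})}{p_{k-1}^TAp_{k-1}}$ and $p_{k+1}=\gamma_kAp_k-\sigma_kp_k-\omega_kp_{k-1}$. *)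

theory Defs
  imports "HOL-Analysis.Analysis"
begin

definition sym_psd :: "real^'n^'n \<Rightarrow> bool" where
  "sym_psd A \<longleftrightarrow> transpose A = A \<and> (\<forall>x. 0 \<le> x \<bullet> (A *v x))"

definition outer_prod :: "real^'n \<Rightarrow> real^'n \<Rightarrow> real^'n^'n" where
  "outer_prod u v = (\<chi> i j. u $ i * v $ j)"

definition is_moore_penrose :: "real^'n^'n \<Rightarrow> real^'n^'n \<Rightarrow> bool" where
  "is_moore_penrose A X \<longleftrightarrow>
     A ** X ** A = A \<and> X ** A ** X = X \<and>
     transpose (A ** X) = A ** X \<and> transpose (X ** A) = X ** A"

definition cd_a :: "real^'n^'n \<Rightarrow> (nat \<Rightarrow> real^'n) \<Rightarrow> (nat \<Rightarrow> real^'n) \<Rightarrow> nat \<Rightarrow> real" where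
  "cd_a A r p k = (r k \<bullet> p k) / (p k \<bullet> (A *v p k))"

definition cd_sigma :: "real^'n^'n \<Rightarrow> (nat \<Rightarrow> real^'n) \<Rightarrow> (nat \<Rightarrow> real) \<Rightarrow> nat \<Rightarrow> real" where
  "cd_sigma A p \<gamma> k = \<gamma> k * (norm (A *v p k))^2 / (p k \<bullet> (A *v p k))"

definition cd_omega :: "real^'n^'n \<Rightarrow> (nat \<Rightarrow> real^'n) \<Rightarrow> (nat \<Rightarrow> real) \<Rightarrow> nat \<Rightarrow> real" where
  "cd_omega A p \<gamma> k =
     \<gamma> k * ((A *v p k) \<bullet> (A *v p (k - 1))) / (p (k - 1) \<bullet> (A *v p (k - 1)))"

definition energy :: "real^'n^'n \<Rightarrow> real^'n \<Rightarrow> real^'n \<Rightarrow> real" where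
  "energy A c y = 1/2 * ((y - c) \<bullet> (A *v (y - c)))"

end

theory Submission
  imports Defs
begin

text \<open>The directions \<open>p\<^sub>0, \<dots>, p\<^sub>m\<close> are \<open>A\<close>-conjugate: the recurrence orthogonalises
  \<open>A p\<^sub>k\<close> against \<open>p\<^sub>k\<close> and \<open>p\<^sub>k\<^sub>-\<^sub>1\<close>, and conjugacy to the older directions is inherited
  because \<open>A p\<^sub>j\<close> lies in the span of \<open>p\<^sub>0, \<dots>, p\<^sub>j\<^sub>+\<^sub>1\<close>. Hence each residual is orthogonal
  to all earlier directions and residuals. Parts (1) and (2) say that \<open>p\<^sub>i\<close> is \<open>A\<close>-orthogonal to
  the directions of the line or plane; (3) is the decrease of an exact line search combined with
  \<open>r\<^sub>i\<^sup>T p\<^sub>i = -(\<gamma>\<^sub>i\<^sub>-\<^sub>1 / a\<^sub>i\<^sub>-\<^sub>1) \<parallel>r\<^sub>i\<parallel>\<^sup>2\<close>; for (4), \<open>y\<^sub>m\<^sub>+\<^sub>1 - y\<^sub>0 = \<Sum> a\<^sub>i p\<^sub>i\<close> lies in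
  the range of \<open>A\<close>, on which \<open>A\<^sup>+\<close> inverts \<open>A\<close>, and
  \<open>p\<^sub>i p\<^sub>i\<^sup>T r\<^sub>0 / p\<^sub>i\<^sup>T A p\<^sub>i = a\<^sub>i p\<^sub>i\<close> since \<open>p\<^sub>i\<^sup>T r\<^sub>0 = p\<^sub>i\<^sup>T r\<^sub>i\<close>.\<close>

lemma inner_matrix_vector_sym:
  fixes A :: "real^'n^'n"
  assumes "transpose A = A"
  shows "x \<bullet> (A *v y) = y \<bullet> (A *v x)"
proof -
  have "x \<bullet> (A *v y) = (x v* A) \<bullet> y" by (simp add: dot_lmul_matrix)
  also have "x v* A = A *v x" by (metis assms transpose_matrix_vector)
  finally show ?thesis by (simp add: inner_commute)
qed

lemma energy_add:
  fixes A :: "real^'n^'n"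
  assumes "transpose A = A"
  shows "energy A c (x + v) = energy A c x + v \<bullet> (A *v (x - c)) + 1/2 * (v \<bullet> (A *v v))"
proof -
  have "x + v - c = (x - c) + v" by simp
  then show ?thesis
    unfolding energy_def using inner_matrix_vector_sym[OF assms, of "x - c" v]
    by (simp add: matrix_vector_right_distrib inner_add_left inner_add_right algebra_simps)
qed

lemma energy_le_energy_add:
  fixes A :: "real^'n^'n"
  assumes "sym_psd A" and "v \<bullet> (A *v (x - c)) = 0"
  shows "energy A c x \<le> energy A c (x + v)"
  using assms energy_add[of A c x v] unfolding sym_psd_def by auto

lemma outer_prod_mult_vector: "outer_prod u v *v (x::real^'n) = (v \<bullet> x) *\<^sub>R u"
  by (simp add: outer_prod_def matrix_vector_mult_def vec_eq_iff inner_vec_def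
      sum_distrib_left mult_ac)

lemma sum_matrix_vector_mult:
  fixes M :: "'i \<Rightarrow> real^'n^'n"
  shows "(\<Sum>i\<in>S. M i) *v x = (\<Sum>i\<in>S. M i *v x)"
proof (induction S rule: infinite_finite_induct)
  case (insert i S)
  then show ?case by (simp add: matrix_vector_mult_add_rdistrib)
qed simp_all

lemma moore_penrose_inverse_on_range:
  fixes A X :: "real^'n^'n"
  assumes "is_moore_penrose A X" and "transpose A = A" and "v \<in> range ((*v) A)"
  shows "X *v (A *v v) = v"
proof -
  obtain w where v: "v = A *v w" using assms(3) by auto
  have "X ** A = A ** transpose X"
    using assms(1,2) unfolding is_moore_penrose_def by (metis matrix_transpose_mul)
  then have "X ** A ** A = A ** transpose X ** A" by simp
  also have "\<dots> = A"
    using assms(1,2) unfolding is_moore_penrose_def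
    by (metis matrix_transpose_mul matrix_mul_assoc)
  finally show ?thesis
    by (metis v matrix_vector_mul_assoc)
qed

locale cd_run =
  fixes A :: "real^'n^'n" and b :: "real^'n"
    and y r p :: "nat \<Rightarrow> real^'n" and \<gamma> :: "nat \<Rightarrow> real" and m :: nat
  assumes sym: "transpose A = A"
    and gamma_nz: "\<gamma> k \<noteq> 0"
    and r0: "r 0 = b - A *v y 0"
    and p0: "p 0 = r 0"
    and ystep: "k \<le> m \<Longrightarrow> y (Suc k) = y k + cd_a A r p k *\<^sub>R p k"
    and rstep: "k \<le> m \<Longrightarrow> r (Suc k) = r k - cd_a A r p k *\<^sub>R (A *v p k)"
    and p1: "1 \<le> m \<Longrightarrow> p 1 = \<gamma> 0 *\<^sub>R (A *v p 0) - cd_sigma A p \<gamma> 0 *\<^sub>R p 0"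
    and pstep: "1 \<le> k \<Longrightarrow> k < m \<Longrightarrow>
        p (Suc k) = \<gamma> k *\<^sub>R (A *v p k) - cd_sigma A p \<gamma> k *\<^sub>R p k
                    - cd_omega A p \<gamma> k *\<^sub>R p (k - 1)"
    and den_nz: "k \<le> m \<Longrightarrow> p k \<bullet> (A *v p k) \<noteq> 0"
begin

abbreviation "a \<equiv> cd_a A r p"
abbreviation "\<sigma> \<equiv> cd_sigma A p \<gamma>"

text \<open>With the convention \<open>\<omega>\<^sub>0 = 0\<close> both recurrences for the directions become one.\<close>
definition \<omega> :: "nat \<Rightarrow> real" where
  "\<omega> k = (if k = 0 then 0 else cd_omega A p \<gamma> k)"

lemma p_Suc:
  "k < m \<Longrightarrow> p (Suc k) = \<gamma> k *\<^sub>R (A *v p k) - \<sigma> k *\<^sub>R p k - \<omega> k *\<^sub>R p (k - 1)"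
  using p1 pstep by (cases "k = 0") (simp_all add: \<omega>_def)

lemma sigma_mult_den:
  "k \<le> m \<Longrightarrow> \<sigma> k * (p k \<bullet> (A *v p k)) = \<gamma> k * ((A *v p k) \<bullet> (A *v p k))"
  using den_nz by (simp add: cd_sigma_def power2_norm_eq_inner)

lemma omega_mult_den:
  "1 \<le> k \<Longrightarrow> k \<le> Suc m \<Longrightarrow>
     \<omega> k * (p (k - 1) \<bullet> (A *v p (k - 1))) = \<gamma> k * ((A *v p k) \<bullet> (A *v p (k - 1)))"
  using den_nz[of "k - 1"] by (simp add: \<omega>_def cd_omega_def)

lemma A_p_in_span: "k < m \<Longrightarrow> A *v p k \<in> span (p ` {..Suc k})"
proof -
  assume k: "k < m"
  have "A *v p k = (1 / \<gamma> k) *\<^sub>R (p (Suc k) + \<sigma> k *\<^sub>R p k + \<omega> k *\<^sub>R p (k - 1))"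
    using p_Suc[OF k] gamma_nz[of k] by (simp add: algebra_simps)
  moreover have "p (Suc k) \<in> span (p ` {..Suc k})" "p k \<in> span (p ` {..Suc k})"
    "p (k - 1) \<in> span (p ` {..Suc k})"
    by (auto intro!: span_base)
  ultimately show ?thesis by (simp add: span_add span_mul)
qed

lemma inner_p_A_p_Suc:
  "k < m \<Longrightarrow> p j \<bullet> (A *v p (Suc k)) =
     \<gamma> k * ((A *v p k) \<bullet> (A *v p j)) - \<sigma> k * (p j \<bullet> (A *v p k)) - \<omega> k * (p j \<bullet> (A *v p (k - 1)))"
  using inner_matrix_vector_sym[OF sym, of "p j" "A *v p k"]
  by (subst p_Suc) (simp_all add: matrix_vector_right_distrib matrix_vector_mult_diff_distrib
      matrix_vector_mult_scaleR inner_diff_right)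

text \<open>The three-term recurrence only removes the components
  along \<open>p\<^sub>k\<close> and \<open>p\<^sub>k\<^sub>-\<^sub>1\<close>; the older ones vanish because \<open>A p\<^sub>j\<close> lies in the span of
  \<open>p\<^sub>0, \<dots>, p\<^sub>j\<^sub>+\<^sub>1\<close>, which is already conjugate to \<open>p\<^sub>k\<close>.\<close>
lemma p_conjugate: "k \<le> m \<Longrightarrow> j < k \<Longrightarrow> p j \<bullet> (A *v p k) = 0"
proof (induction k arbitrary: j rule: less_induct)
  case (less k)
  then obtain k' where k: "k = Suc k'" "k' < m" by (cases k) auto
  have IH: "i \<le> k' \<Longrightarrow> l < i \<Longrightarrow> p l \<bullet> (A *v p i) = 0" for i l
    using less k by auto
  have IH': "i \<le> k' \<Longrightarrow> l < i \<Longrightarrow> p i \<bullet> (A *v p l) = 0" for i l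
    using IH inner_matrix_vector_sym[OF sym] by metis
  consider "j = k'" | "Suc j = k'" | "Suc j < k'" using less k by linarith
  then show ?case
  proof cases
    case 1
    have "\<omega> k' * (p k' \<bullet> (A *v p (k' - 1))) = 0"
      using IH'[of k' "k' - 1"] by (cases "k' = 0") (simp_all add: \<omega>_def)
    then show ?thesis
      using inner_p_A_p_Suc[OF k(2), of j] sigma_mult_den[of k'] 1 k by simp
  next
    case 2
    then have "j = k' - 1" by simp
    then show ?thesis
      using inner_p_A_p_Suc[OF k(2), of j] omega_mult_den[of k'] IH[of k' j] 2 k
      by (simp add: inner_commute)
  next
    case 3
    have "orthogonal (A *v p k') (A *v p j)"
    proof (rule orthogonal_to_span[OF A_p_in_span])
      show "j < m" using 3 k by simp
      fix z assume "z \<in> p ` {..Suc j}"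
      then show "orthogonal (A *v p k') z"
        using IH 3 by (auto simp: orthogonal_def inner_commute)
    qed
    then have "(A *v p k') \<bullet> (A *v p j) = 0" by (simp add: orthogonal_def)
    then show ?thesis
      using inner_p_A_p_Suc[OF k(2), of j] IH[of k' j] IH[of "k' - 1" j] 3 k by simp
  qed
qed

lemma r_eq_residual: "k \<le> Suc m \<Longrightarrow> r k = b - A *v y k"
proof (induction k)
  case 0
  then show ?case using r0 by simp
next
  case (Suc k)
  then show ?case using ystep[of k] rstep[of k]
    by (simp add: matrix_vector_right_distrib matrix_vector_mult_scaleR)
qed

lemma a_mult_den: "k \<le> m \<Longrightarrow> a k * (p k \<bullet> (A *v p k)) = r k \<bullet> p k"
  using den_nz by (simp add: cd_a_def)

lemma r_orthogonal_p: "k \<le> Suc m \<Longrightarrow> j < k \<Longrightarrow> r k \<bullet> p j = 0"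
proof (induction k arbitrary: j)
  case 0
  then show ?case by simp
next
  case (Suc k)
  then have k: "k \<le> m" by simp
  have "r (Suc k) \<bullet> p j = r k \<bullet> p j - a k * (p j \<bullet> (A *v p k))"
    using rstep[OF k] by (simp add: inner_diff_left inner_diff_right inner_commute)
  moreover have "r k \<bullet> p j - a k * (p j \<bullet> (A *v p k)) = 0"
  proof (cases "j = k")
    case True
    then show ?thesis using a_mult_den[OF k] by (simp add: inner_commute)
  next
    case False
    then show ?thesis using Suc p_conjugate[of k j] k by simp
  qed
  ultimately show ?case by simp
qed

lemma r_inner_p_eq_r0_inner_p: "k \<le> m \<Longrightarrow> j \<le> k \<Longrightarrow> r j \<bullet> p k = r 0 \<bullet> p k"
proof (induction j)
  case (Suc j)
  have "r (Suc j) \<bullet> p k = r j \<bullet> p k - a j * (p j \<bullet> (A *v p k))"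
    using rstep[of j] Suc inner_matrix_vector_sym[OF sym, of "p k" "p j"]
    by (simp add: inner_diff_left inner_diff_right inner_commute)
  then show ?case using Suc p_conjugate[of k j] by simp
qed simp

lemma r_in_span: "k \<le> m \<Longrightarrow> r k \<in> span (p ` {..k})"
proof (induction k)
  case 0
  then show ?case using p0 by (auto intro!: span_base)
next
  case (Suc k)
  have "span (p ` {..k}) \<subseteq> span (p ` {..Suc k})" by (rule span_mono) auto
  then have "r k \<in> span (p ` {..Suc k})" using Suc by auto
  moreover have "A *v p k \<in> span (p ` {..Suc k})" using A_p_in_span Suc by simp
  ultimately show ?case using rstep Suc by (simp add: span_diff span_mul)
qed

lemma r_orthogonal: "k \<le> Suc m \<Longrightarrow> j < k \<Longrightarrow> r k \<bullet> r j = 0"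
proof -
  assume k: "k \<le> Suc m" and j: "j < k"
  have "orthogonal (r k) (r j)"
  proof (rule orthogonal_to_span[OF r_in_span])
    show "j \<le> m" using k j by simp
    fix z assume "z \<in> p ` {..j}"
    then show "orthogonal (r k) z"
      using r_orthogonal_p[OF k] j by (auto simp: orthogonal_def)
  qed
  then show ?thesis by (simp add: orthogonal_def)
qed

text \<open>Only the \<open>A p\<^sub>k\<close>-component of \<open>p\<^sub>k\<^sub>+\<^sub>1\<close> is seen by \<open>r\<^sub>k\<^sub>+\<^sub>1\<close>, and \<open>a\<^sub>k A p\<^sub>k = r\<^sub>k - r\<^sub>k\<^sub>+\<^sub>1\<close>.\<close>
lemma r_inner_p_Suc:
  assumes "k < m"
  shows "(r (Suc k) \<bullet> p (Suc k)) * a k = - \<gamma> k * (r (Suc k) \<bullet> r (Suc k))"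
proof -
  have "r (Suc k) \<bullet> p (Suc k) = \<gamma> k * (r (Suc k) \<bullet> (A *v p k))"
    using p_Suc[OF assms] r_orthogonal_p[of "Suc k" k] r_orthogonal_p[of "Suc k" "k - 1"] assms
    by (simp add: inner_diff_right)
  moreover have "a k * (r (Suc k) \<bullet> (A *v p k)) = r (Suc k) \<bullet> r k - r (Suc k) \<bullet> r (Suc k)"
    using rstep[of k] assms by (simp add: inner_diff_right)
  then have "a k * (r (Suc k) \<bullet> (A *v p k)) = - (r (Suc k) \<bullet> r (Suc k))"
    using r_orthogonal[of "Suc k" k] assms by simp
  ultimately show ?thesis by (simp add: algebra_simps)
qed

lemma a_nonzero:
  assumes r_nz: "\<And>k. k \<le> m \<Longrightarrow> r k \<noteq> 0"
  shows "k \<le> m \<Longrightarrow> a k \<noteq> 0"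
proof (induction k)
  case 0
  then show ?case using den_nz[of 0] r_nz[of 0] p0 by (simp add: cd_a_def)
next
  case (Suc k)
  then have "(r (Suc k) \<bullet> p (Suc k)) * a k \<noteq> 0"
    using r_inner_p_Suc[of k] r_nz[of "Suc k"] gamma_nz[of k] by simp
  then show ?case using den_nz[of "Suc k"] Suc by (simp add: cd_a_def)
qed

lemma p_in_range:
  assumes "b \<in> range ((*v) A)"
  shows "k \<le> m \<Longrightarrow> p k \<in> range ((*v) A)"
proof (induction k rule: less_induct)
  case (less k)
  have subspace: "subspace (range ((*v) A))"
    by (rule linear_subspace_image) simp_all
  show ?case
  proof (cases k)
    case 0
    obtain z where "b = A *v z" using assms by auto
    then have "p k = A *v (z - y 0)"
      using 0 p0 r0 by (simp add: matrix_vector_mult_diff_distrib)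
    then show ?thesis by simp
  next
    case (Suc k')
    then show ?thesis
      using p_Suc[of k'] less.IH[of k'] less.IH[of "k' - 1"] less.prems
      by (auto intro!: subspace_diff[OF subspace] subspace_mul[OF subspace])
  qed
qed

lemma energy_min_line:
  assumes "sym_psd A" and "1 \<le> m"
  shows "energy A (y 1) (y 1 + \<gamma> 0 *\<^sub>R (A *v p 0) + (- \<sigma> 0) *\<^sub>R p 0)
           \<le> energy A (y 1) (y 1 + \<gamma> 0 *\<^sub>R (A *v p 0) + t *\<^sub>R p 0)"
proof -
  let ?x = "y 1 + \<gamma> 0 *\<^sub>R (A *v p 0) + (- \<sigma> 0) *\<^sub>R p 0"
  have "?x - y 1 = p 1" using p1 assms(2) by simp
  then have "((t + \<sigma> 0) *\<^sub>R p 0) \<bullet> (A *v (?x - y 1)) = 0"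
    using p_conjugate[of 1 0] assms(2) by simp
  then have "energy A (y 1) ?x \<le> energy A (y 1) (?x + (t + \<sigma> 0) *\<^sub>R p 0)"
    by (rule energy_le_energy_add[OF assms(1)])
  then show ?thesis by (simp add: algebra_simps)
qed

lemma energy_min_plane:
  assumes "sym_psd A" and "2 \<le> i" and "i \<le> m"
  shows "energy A (y i) (y i + \<gamma> (i - 1) *\<^sub>R (A *v p (i - 1))
            + (- \<sigma> (i - 1)) *\<^sub>R p (i - 1) + (- cd_omega A p \<gamma> (i - 1)) *\<^sub>R p (i - 2))
           \<le> energy A (y i) (y i + \<gamma> (i - 1) *\<^sub>R (A *v p (i - 1))
            + s *\<^sub>R p (i - 1) + t *\<^sub>R p (i - 2))"
proof -
  let ?x = "y i + \<gamma> (i - 1) *\<^sub>R (A *v p (i - 1))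
            + (- \<sigma> (i - 1)) *\<^sub>R p (i - 1) + (- cd_omega A p \<gamma> (i - 1)) *\<^sub>R p (i - 2)"
  let ?v = "(s + \<sigma> (i - 1)) *\<^sub>R p (i - 1) + (t + cd_omega A p \<gamma> (i - 1)) *\<^sub>R p (i - 2)"
  have "p i = p (Suc (i - 1))" "i - 1 - 1 = i - 2" "i - 1 \<noteq> 0" using assms by auto
  then have "?x - y i = p i"
    using p_Suc[of "i - 1"] assms by (simp add: \<omega>_def algebra_simps)
  then have "?v \<bullet> (A *v (?x - y i)) = 0"
    using p_conjugate[of i "i - 1"] p_conjugate[of i "i - 2"] assms by (simp add: inner_add_left)
  then have "energy A (y i) ?x \<le> energy A (y i) (?x + ?v)"
    by (rule energy_le_energy_add[OF assms(1)])
  then show ?thesis by (simp add: algebra_simps)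
qed

text \<open>The decrease \<open>\<frac>12 (r\<^sub>i\<^sup>T p\<^sub>i)\<^sup>2 / p\<^sub>i\<^sup>T A p\<^sub>i\<close> of exact line search, rewritten with
  \<open>r\<^sub>i\<^sup>T p\<^sub>i = -(\<gamma>\<^sub>i\<^sub>-\<^sub>1 / a\<^sub>i\<^sub>-\<^sub>1) \<parallel>r\<^sub>i\<parallel>\<^sup>2\<close>.\<close>
lemma energy_decrease:
  assumes r_nz: "\<And>k. k \<le> m \<Longrightarrow> r k \<noteq> 0" and ystar: "A *v ystar = b"
    and i: "1 \<le> i" "i \<le> m"
  shows "energy A ystar (y i + a i *\<^sub>R p i)
           = energy A ystar (y i)
             - 1/2 * (\<gamma> (i - 1) / a (i - 1))^2 * (norm (r i))^4 / (p i \<bullet> (A *v p i))"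
proof -
  define d where "d = p i \<bullet> (A *v p i)"
  define q where "q = r i \<bullet> p i"
  have "A *v (y i - ystar) = - r i"
    using r_eq_residual[of i] i ystar by (simp add: matrix_vector_mult_diff_distrib)
  then have "energy A ystar (y i + a i *\<^sub>R p i) = energy A ystar (y i) - a i * q + 1/2 * (a i)^2 * d"
    using energy_add[OF sym, of ystar "y i" "a i *\<^sub>R p i"]
    by (simp add: q_def d_def matrix_vector_mult_scaleR power2_eq_square inner_commute)
  also have "\<dots> = energy A ystar (y i) - 1/2 * q^2 / d"
    using den_nz[of i] i by (simp add: cd_a_def q_def d_def field_simps power2_eq_square)
  also have "q = - \<gamma> (i - 1) / a (i - 1) * (norm (r i))^2"
    using r_inner_p_Suc[of "i - 1"] a_nonzero[OF r_nz, of "i - 1"] i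
    by (simp add: q_def power2_norm_eq_inner field_simps)
  finally show ?thesis
    by (simp add: d_def power_mult_distrib power_divide flip: power_mult)
qed

lemma pseudoinverse_residual:
  assumes "is_moore_penrose A X" and final: "A *v y (Suc m) = b"
  shows "(X - (\<Sum>i\<le>m. (1 / (p i \<bullet> (A *v p i))) *\<^sub>R outer_prod (p i) (p i))) *v r 0 = 0"
proof -
  have "b \<in> range ((*v) A)" using final by auto
  then have "p i \<in> range ((*v) A)" if "i \<le> m" for i
    using p_in_range that by blast
  then have w_range: "(\<Sum>i\<le>m. a i *\<^sub>R p i) \<in> range ((*v) A)"
    by (intro subspace_sum subspace_mul linear_subspace_image) auto
  have "y (Suc m) = y 0 + (\<Sum>i\<le>m. a i *\<^sub>R p i)"
  proof -
    have "k \<le> Suc m \<Longrightarrow> y k = y 0 + (\<Sum>i<k. a i *\<^sub>R p i)" for k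
    proof (induction k)
      case (Suc k)
      then show ?case using ystep[of k] by simp
    qed simp
    from this[of "Suc m"] show ?thesis by (simp add: lessThan_Suc_atMost)
  qed
  then have "r 0 = A *v (\<Sum>i\<le>m. a i *\<^sub>R p i)"
    using r0 final by (auto simp: matrix_vector_right_distrib algebra_simps)
  then have "X *v r 0 = (\<Sum>i\<le>m. a i *\<^sub>R p i)"
    using moore_penrose_inverse_on_range[OF assms(1) sym w_range] by simp
  moreover have "(\<Sum>i\<le>m. (1 / (p i \<bullet> (A *v p i))) *\<^sub>R outer_prod (p i) (p i)) *v r 0
      = (\<Sum>i\<le>m. a i *\<^sub>R p i)"
    unfolding sum_matrix_vector_mult
  proof (rule sum.cong)
    fix i assume "i \<in> {..m}"
    then have "r 0 \<bullet> p i = r i \<bullet> p i" using r_inner_p_eq_r0_inner_p[of i i] by simp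
    then show "((1 / (p i \<bullet> (A *v p i))) *\<^sub>R outer_prod (p i) (p i)) *v r 0 = a i *\<^sub>R p i"
      by (simp add: scaleR_matrix_vector_assoc[symmetric] outer_prod_mult_vector cd_a_def
          inner_commute)
  qed simp
  ultimately show ?thesis by (simp add: matrix_vector_mult_diff_rdistrib)
qed

end

theorem theorem3:
  fixes A :: "real^'n^'n" and b :: "real^'n"
    and y r p :: "nat \<Rightarrow> real^'n" and \<gamma> :: "nat \<Rightarrow> real" and m :: nat
    and ystar :: "real^'n"
  assumes psd: "sym_psd A"
    and gamma_nz: "\<forall>k. \<gamma> k \<noteq> 0"
    and r0: "r 0 = b - A *v y 0"
    and p0: "p 0 = r 0"
    and ystep: "\<forall>k\<le>m. y (Suc k) = y k + cd_a A r p k *\<^sub>R p k"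
    and rstep: "\<forall>k\<le>m. r (Suc k) = r k - cd_a A r p k *\<^sub>R (A *v p k)"
    and p1: "1 \<le> m \<longrightarrow> p 1 = \<gamma> 0 *\<^sub>R (A *v p 0) - cd_sigma A p \<gamma> 0 *\<^sub>R p 0"
    and pstep: "\<forall>k. 1 \<le> k \<and> k < m \<longrightarrow>
        p (Suc k) = \<gamma> k *\<^sub>R (A *v p k) - cd_sigma A p \<gamma> k *\<^sub>R p k
                    - cd_omega A p \<gamma> k *\<^sub>R p (k - 1)"
    and r_nz: "\<forall>k\<le>m. r k \<noteq> 0"
    and den_nz: "\<forall>k\<le>m. p k \<bullet> (A *v p k) \<noteq> 0"
    and dim: "m + 1 \<le> CARD('n)"
    and final: "A *v y (Suc m) = b"
    and ystar: "A *v ystar = b"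
  shows
    "(1 \<le> m \<longrightarrow>
        (\<forall>t. energy A (y 1) (y 1 + \<gamma> 0 *\<^sub>R (A *v p 0) + (- cd_sigma A p \<gamma> 0) *\<^sub>R p 0)
              \<le> energy A (y 1) (y 1 + \<gamma> 0 *\<^sub>R (A *v p 0) + t *\<^sub>R p 0)))
     \<and> (\<forall>i. 2 \<le> i \<and> i \<le> m \<longrightarrow>
        (\<forall>s t. energy A (y i) (y i + \<gamma> (i - 1) *\<^sub>R (A *v p (i - 1))
                 + (- cd_sigma A p \<gamma> (i - 1)) *\<^sub>R p (i - 1)
                 + (- cd_omega A p \<gamma> (i - 1)) *\<^sub>R p (i - 2))
              \<le> energy A (y i) (y i + \<gamma> (i - 1) *\<^sub>R (A *v p (i - 1))
                 + s *\<^sub>R p (i - 1) + t *\<^sub>R p (i - 2))))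
     \<and> (\<forall>i. 1 \<le> i \<and> i \<le> m \<longrightarrow>
        energy A ystar (y i + cd_a A r p i *\<^sub>R p i)
          = energy A ystar (y i)
            - 1/2 * (\<gamma> (i - 1) / cd_a A r p (i - 1))^2 * (norm (r i))^4
                  / (p i \<bullet> (A *v p i)))
     \<and> (\<forall>X. is_moore_penrose A X \<longrightarrow>
        (X - (\<Sum>i\<le>m. (1 / (p i \<bullet> (A *v p i))) *\<^sub>R outer_prod (p i) (p i))) *v r 0 = 0)"
proof -
  interpret cd_run A b y r p \<gamma> m
    using psd gamma_nz r0 p0 ystep rstep p1 pstep den_nz
    by unfold_locales (auto simp: sym_psd_def)
  have "\<And>k. k \<le> m \<Longrightarrow> r k \<noteq> 0" using r_nz by blast
  then show ?thesis
    using energy_min_line[OF psd] energy_min_plane[OF psd]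
      energy_decrease[OF _ ystar] pseudoinverse_residual[OF _ final]
    by blast
qed

end
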